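(* Let $N\ge1$, $k>0$, $\gamma>0$, and let all $N$ channels have the same SNR $\gamma$. Define $\bar\Delta^*_{\mathrm{CS}}=\inf_{n>0}\bar\Delta_{\mathrm{CS}}(n)$, $\bar\Delta^*_{\mathrm{MP}}=\inf_{n>0}\left[\frac{n(1+\epsilon_{\mathrm{SC}}(n))}{2N(1-\epsilon_{\mathrm{SC}}(n))}+n\right]$, and $\bar\Delta^*_{\mathrm{PD}}=\inf_{n>0}\bar\Delta_{\mathrm{PD}}(n)$. Then $$\bar\Delta^*_{\mathrm{CS}}\le\bar\Delta^*_{\mathrm{MP}}\le\bar\Delta^*_{\mathrm{PD}}.$$
   Context: Let $Q(x)=\frac{1}{\sqrt{2\pi}}\int_x^\infty e^{-t^2/2}dt$ and for blocklength $n>0$, message size $k$ bits and SNR $\gamma>0$ let $\epsilon(n,k,\gamma)=Q\!\left(\frac{\frac12\log_2(1+\gamma)-\frac kn}{\log_2(e)\sqrt{\frac{1}{2n}\left(1-\frac{1}{(1+\gamma)^2}\right)}}\right)$ (variables treated as continuous). With $N$ channels of common SNR $\gamma$: single-channel error $\epsilon_{\mathrm{SC}}(n)=\epsilon(n,k,\gamma)$; packet duplication error $\epsilon_{\mathrm{PD}}(n)=\epsilon(n,k,\gamma)^N$; codeword splitting error (one codeword split into $N$ fragments of length $n$ sent in parallel) $\epsilon_{\mathrm{CS}}(n)=Q\!\left(\frac{\sum_{i=1}^N\frac12\log_2(1+\gamma)-\frac kn}{\log_2(e)\sqrt{\frac{1}{2n}\sum_{i=1}^N\left(1-\frac{1}{(1+\gamma)^2}\right)}}\right)$.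 For $\chi\in\{\mathrm{PD},\mathrm{CS}\}$, $\bar\Delta_\chi(n)=\frac{n(1+\epsilon_\chi(n))}{2(1-\epsilon_\chi(n))}+n$, the time-average Age of Information of the scheme that every $n$ time units generates a fresh update and delivers it $n$ time units later, successfully with probability $1-\epsilon_\chi(n)$ independently. The expression $\frac{n(1+\epsilon_{\mathrm{SC}}(n))}{2N(1-\epsilon_{\mathrm{SC}}(n))}+n$ is the time-average AoI of the multiplexing scheme (each of the $N$ channels periodically sends a fresh update with blocklength $n$, with offsets $\delta_i=in/N$) with optimal offsets. *)

theory Defs
  imports "HOL-Analysis.Analysis"
begin

definition Qfun :: "real \<Rightarrow> real" where
  "Qfun x = (1 / sqrt (2 * pi)) * (LBINT t:{x..}. exp (- (t^2) / 2))"

text \<open>Normal-approximation error probability epsilon(n,k,gamma); n, k real (continuous).\<close>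
definition eps :: "real \<Rightarrow> real \<Rightarrow> real \<Rightarrow> real" where
  "eps n k \<gamma> = Qfun ((1/2 * log 2 (1 + \<gamma>) - k / n) /
      (log 2 (exp 1) * sqrt (1 / (2 * n) * (1 - 1 / (1 + \<gamma>)^2))))"

definition eps_SC :: "real \<Rightarrow> real \<Rightarrow> real \<Rightarrow> real" where
  "eps_SC k \<gamma> n = eps n k \<gamma>"

definition eps_PD :: "nat \<Rightarrow> real \<Rightarrow> real \<Rightarrow> real \<Rightarrow> real" where
  "eps_PD N k \<gamma> n = (eps n k \<gamma>) ^ N"

definition eps_CS :: "nat \<Rightarrow> real \<Rightarrow> real \<Rightarrow> real \<Rightarrow> real" where
  "eps_CS N k \<gamma> n = Qfun (((\<Sum>i=1..N. 1/2 * log 2 (1 + \<gamma>)) - k / n) /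
      (log 2 (exp 1) * sqrt (1 / (2 * n) * (\<Sum>i=1..N. (1 - 1 / (1 + \<gamma>)^2)))))"

definition aoi :: "real \<Rightarrow> real \<Rightarrow> real" where
  "aoi e n = n * (1 + e) / (2 * (1 - e)) + n"

definition aoi_CS :: "nat \<Rightarrow> real \<Rightarrow> real \<Rightarrow> real \<Rightarrow> real" where
  "aoi_CS N k \<gamma> n = aoi (eps_CS N k \<gamma> n) n"

definition aoi_PD :: "nat \<Rightarrow> real \<Rightarrow> real \<Rightarrow> real \<Rightarrow> real" where
  "aoi_PD N k \<gamma> n = aoi (eps_PD N k \<gamma> n) n"

definition aoi_MP :: "nat \<Rightarrow> real \<Rightarrow> real \<Rightarrow> real \<Rightarrow> real" where
  "aoi_MP N k \<gamma> n = n * (1 + eps_SC k \<gamma> n) / (2 * real N * (1 - eps_SC k \<gamma> n)) + n"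

end

theory Submission
  imports Defs "HOL-Probability.Probability"
begin

(* Codeword splitting at blocklength n / N has the same error probability as a single channel at
   blocklength n, because both the capacity term and the dispersion term add up over the N channels;
   so it matches the multiplexing AoI at n while the delivery delay shrinks from n to n / N.
   Against packet duplication with error e ^ N, multiplexing wins because
   (1 + e) / (N (1 - e)) <= (1 + e ^ N) / (1 - e ^ N): write 1 - e ^ N = (1 - e) * (sum of e ^ i, i < N)
   and pair e ^ i with e ^ (N - i), using e ^ i + e ^ (N - i) <= 1 + e ^ N.
   Both comparisons hold pointwise in n. *)

lemma Qfun_eq_std_normal: "Qfun x = (\<integral>t. indicator {x..} t * std_normal_density t \<partial>lborel)"
  unfolding Qfun_def set_lebesgue_integral_def std_normal_density_def
  by (simp add: integral_mult_right_zero[symmetric] mult.assoc mult.left_commute)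

lemma Qfun_nonneg: "0 \<le> Qfun x"
  unfolding Qfun_eq_std_normal by (rule integral_nonneg_AE) (auto simp: indicator_def)

lemma Qfun_le_one: "Qfun x \<le> 1"
proof -
  have "integrable lborel (\<lambda>t. indicator {x..} t * std_normal_density t)"
    using integrable_mult_indicator[of "{x..}" lborel std_normal_density] by simp
  then have "Qfun x \<le> (\<integral>t. std_normal_density t \<partial>lborel)"
    unfolding Qfun_eq_std_normal by (rule integral_mono) (auto simp: indicator_def)
  then show ?thesis by simp
qed

lemma geometric_sum_pairing:
  fixes e :: real
  assumes "0 \<le> e" "e \<le> 1"
  shows "(1 + e) * (\<Sum>i<N. e ^ i) \<le> real N * (1 + e ^ N)"
proof -
  have "(\<Sum>i<N. e ^ Suc i) = (\<Sum>i<N. e ^ Suc (N - Suc i))"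
    by (rule sum.nat_diff_reindex[symmetric])
  also have "\<dots> = (\<Sum>i<N. e ^ (N - i))"
    by (rule sum.cong) (auto simp: Suc_diff_Suc)
  finally have "(1 + e) * (\<Sum>i<N. e ^ i) = (\<Sum>i<N. e ^ i + e ^ (N - i))"
    by (simp add: sum.distrib sum_distrib_left algebra_simps)
  also have "\<dots> \<le> (\<Sum>i<N. 1 + e ^ N)"
  proof (rule sum_mono)
    fix i assume "i \<in> {..<N}"
    then have "e ^ N = e ^ i * e ^ (N - i)"
      by (simp add: power_add[symmetric])
    moreover have "0 \<le> (1 - e ^ i) * (1 - e ^ (N - i))"
      using assms by (intro mult_nonneg_nonneg) (auto simp: power_le_one)
    ultimately show "e ^ i + e ^ (N - i) \<le> 1 + e ^ N"
      by (simp add: algebra_simps)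
  qed
  finally show ?thesis by simp
qed

lemma one_plus_div_one_minus_le_power:
  fixes e :: real
  assumes "0 \<le> e" "e < 1" "N \<ge> 1"
  shows "(1 + e) / (real N * (1 - e)) \<le> (1 + e ^ N) / (1 - e ^ N)"
proof -
  have "e ^ N < 1"
    using assms by (simp add: power_less_one_iff)
  have "(1 + e) * (1 - e ^ N) = (1 - e) * ((1 + e) * (\<Sum>i<N. e ^ i))"
    by (simp add: one_diff_power_eq)
  also have "\<dots> \<le> (1 - e) * (real N * (1 + e ^ N))"
    using geometric_sum_pairing assms by (intro mult_left_mono) auto
  finally show ?thesis
    using assms \<open>e ^ N < 1\<close> by (simp add: divide_simps) (simp add: mult_ac)
qed

lemma eps_bounds: "0 \<le> eps n k \<gamma>" "eps n k \<gamma> \<le> 1"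
  unfolding eps_def by (rule Qfun_nonneg Qfun_le_one)+

lemma eps_CS_split_blocklength:
  assumes "N \<ge> 1" "n > 0"
  shows "eps_CS N k \<gamma> (n / real N) = eps_SC k \<gamma> n"
proof -
  have N: "real N > 0"
    using assms by simp
  have "1 / (2 * (n / real N)) * (real N * (1 - 1 / (1 + \<gamma>)^2))
      = (real N)^2 * (1 / (2 * n) * (1 - 1 / (1 + \<gamma>)^2))"
    using N by (simp add: field_simps power2_eq_square)
  then have "sqrt (1 / (2 * (n / real N)) * (real N * (1 - 1 / (1 + \<gamma>)^2)))
      = real N * sqrt (1 / (2 * n) * (1 - 1 / (1 + \<gamma>)^2))"
    by (simp only: real_sqrt_mult real_sqrt_abs abs_of_nonneg of_nat_0_le_iff)
  moreover have "real N * (1/2 * log 2 (1 + \<gamma>)) - k / (n / real N)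
      = real N * (1/2 * log 2 (1 + \<gamma>) - k / n)"
    using N by (simp add: field_simps)
  ultimately show ?thesis
    unfolding eps_CS_def eps_SC_def eps_def using N by simp
qed

lemma aoi_nonneg:
  assumes "0 \<le> e" "e \<le> 1" "0 < n"
  shows "0 \<le> aoi e n"
  using assms by (cases "e = 1") (auto simp: aoi_def intro!: add_nonneg_nonneg divide_nonneg_pos)

lemma aoi_CS_nonneg: "n > 0 \<Longrightarrow> 0 \<le> aoi_CS N k \<gamma> n"
  unfolding aoi_CS_def eps_CS_def by (intro aoi_nonneg Qfun_nonneg Qfun_le_one)

lemma aoi_MP_nonneg:
  assumes "n > 0"
  shows "0 \<le> aoi_MP N k \<gamma> n"
proof -
  have "aoi_MP N k \<gamma> n = (aoi (eps n k \<gamma>) n - n) / real N + n"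
    by (simp add: aoi_MP_def aoi_def eps_SC_def)
  moreover have "n \<le> aoi (eps n k \<gamma>) n"
    using eps_bounds[of n k \<gamma>] assms
    by (cases "eps n k \<gamma> = 1") (auto simp: aoi_def)
  ultimately show ?thesis
    using assms by simp
qed

lemma aoi_CS_le_aoi_MP:
  assumes "N \<ge> 1" "n > 0"
  shows "aoi_CS N k \<gamma> (n / real N) \<le> aoi_MP N k \<gamma> n"
proof -
  let ?e = "eps_SC k \<gamma> n"
  have "aoi_CS N k \<gamma> (n / real N) = n * (1 + ?e) / (2 * real N * (1 - ?e)) + n / real N"
    unfolding aoi_CS_def eps_CS_split_blocklength[OF assms] aoi_def by simp
  moreover have "n / real N \<le> n"
    using assms by (simp add: divide_le_eq)
  ultimately show ?thesis
    unfolding aoi_MP_def by linarith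
qed

lemma aoi_MP_le_aoi_PD:
  assumes "N \<ge> 1" "n > 0"
  shows "aoi_MP N k \<gamma> n \<le> aoi_PD N k \<gamma> n"
proof (cases "eps n k \<gamma> = 1")
  case True
  then show ?thesis
    by (simp add: aoi_MP_def aoi_PD_def aoi_def eps_SC_def eps_PD_def)
next
  case False
  then have "(1 + eps n k \<gamma>) / (real N * (1 - eps n k \<gamma>))
      \<le> (1 + eps n k \<gamma> ^ N) / (1 - eps n k \<gamma> ^ N)"
    using eps_bounds[of n k \<gamma>] assms(1) by (intro one_plus_div_one_minus_le_power) auto
  then have "n * ((1 + eps n k \<gamma>) / (real N * (1 - eps n k \<gamma>))) / 2
      \<le> n * ((1 + eps n k \<gamma> ^ N) / (1 - eps n k \<gamma> ^ N)) / 2"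
    using assms(2) by (intro divide_right_mono mult_left_mono) auto
  then show ?thesis
    by (simp add: aoi_MP_def aoi_PD_def aoi_def eps_SC_def eps_PD_def field_simps)
qed

theorem theorem2:
  fixes N :: nat and k \<gamma> :: real
  assumes "N \<ge> 1" and "k > 0" and "\<gamma> > 0"
  shows "Inf (aoi_CS N k \<gamma> ` {0<..}) \<le> Inf (aoi_MP N k \<gamma> ` {0<..})
       \<and> Inf (aoi_MP N k \<gamma> ` {0<..}) \<le> Inf (aoi_PD N k \<gamma> ` {0<..})"
proof
  show "Inf (aoi_CS N k \<gamma> ` {0<..}) \<le> Inf (aoi_MP N k \<gamma> ` {0<..})"
  proof (rule cINF_mono)
    show "bdd_below (aoi_CS N k \<gamma> ` {0<..})"
      by (rule bdd_belowI2[of _ 0]) (simp add: aoi_CS_nonneg)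
    fix n :: real assume "n \<in> {0<..}"
    then show "\<exists>m\<in>{0<..}. aoi_CS N k \<gamma> m \<le> aoi_MP N k \<gamma> n"
      using aoi_CS_le_aoi_MP[OF assms(1)] assms(1) by (intro bexI[of _ "n / real N"]) auto
  qed auto
  show "Inf (aoi_MP N k \<gamma> ` {0<..}) \<le> Inf (aoi_PD N k \<gamma> ` {0<..})"
  proof (rule cINF_mono)
    show "bdd_below (aoi_MP N k \<gamma> ` {0<..})"
      by (rule bdd_belowI2[of _ 0]) (simp add: aoi_MP_nonneg)
  qed (use aoi_MP_le_aoi_PD[OF assms(1)] in auto)
qed

end
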